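(* Let $n\geq 1$. For a Tamari interval $[S,T]$ of size $n$, define $\psi([S,T])=(c_1,\dots,c_{n-1})$ by $c_i=r_S(i)-\ell_T(i+1)$ for $i\in[n-1]$, where $r_S(i)$ is the number of nodes in the right subtree of node $i$ of $S$ and $\ell_T(j)$ is the number of nodes in the left subtree of node $j$ of $T$. Then $\psi$ takes values in $\mathcal{CC}_n$ and is an isomorphism of posets from $(\mathcal{TI}_n,\leq_{\mathrm{ti}})$ to $(\mathcal{CC}_n,\leq_{\mathrm{cc}})$.
   Context: Binary trees with $n$ nodes have their nodes labeled $1,\dots,n$ in in-order (left subtree, root, right subtree). A right rotation replaces a subtree of the form $((A,x,B),y,C)$ by $(A,x,(B,y,C))$. The Tamari order: $S\leq_{\mathrm t}T$ iff $T$ is obtained from $S$ by a finite sequence of right rotations. $\mathcal{TI}_n$ is the set of Tamari intervals $[S,T]$, i.e. pairs of binary trees with $n$ nodes with $S\leq_{\mathrm t}T$, ordered by $[S,T]\leq_{\mathrm{ti}}[S',T']$ iff $S\leq_{\mathrm t}S'$ and $T\leq_{\mathrm t}T'$. A Tamari diagram of size $n$ is a word $u=u_1\cdots u_n$ of integers with $0\leq u_i\leq n-i$ and $u_{i+j}\leq u_i-j$ for all $i\in[n]$, $0\leq j\leq u_i$. A dual Tamari diagram of size $n$ is a word $v$ of integers with $0\leq v_i\leq i-1$ and $v_{i-j}\leq v_i-j$ for all $i\in[n]$, $0\leq j\leq v_i$. $(u,v)$ is a Tamari interval diagram if moreover for all $1\leq i<j\leq n$ with $j-i\leq u_i$ one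 has $v_j<j-i$. A cubic coordinate of size $n$ is $c\in\mathbb{Z}^{n-1}$ such that $(u,v)$ with $u_i=\max(c_i,0)$ ($i\in[n-1]$), $u_n=0$, $v_1=0$, $v_i=|\min(c_{i-1},0)|$ ($2\leq i\leq n$) is a Tamari interval diagram; $\mathcal{CC}_n$ is their set, ordered componentwise: $c\leq_{\mathrm{cc}}c'$ iff $c_i\leq c'_i$ for all $i$. (The map $\psi$ is the composite of the Châtel–Pons bijection from Tamari intervals to interval-posets with the bijections from interval-posets to Tamari interval diagrams to cubic coordinates.) *)

theory Defs
  imports Main
begin

text \<open>Unlabelled binary trees; the nodes of a tree with n nodes are labelled 1..n in in-order.\<close>
datatype bt = Leaf | Node bt bt

fun nodes :: "bt \<Rightarrow> nat" where
  "nodes Leaf = 0"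
| "nodes (Node l r) = Suc (nodes l + nodes r)"

inductive right_rot :: "bt \<Rightarrow> bt \<Rightarrow> bool" where
  root: "right_rot (Node (Node A B) C) (Node A (Node B C))"
| left: "right_rot l l' \<Longrightarrow> right_rot (Node l r) (Node l' r)"
| right: "right_rot r r' \<Longrightarrow> right_rot (Node l r) (Node l r')"

definition tamari_le :: "bt \<Rightarrow> bt \<Rightarrow> bool" where
  "tamari_le S T \<longleftrightarrow> right_rot\<^sup>*\<^sup>* S T"

fun rsub :: "bt \<Rightarrow> nat \<Rightarrow> nat" where
  "rsub Leaf i = 0"
| "rsub (Node l r) i =
     (if i \<le> nodes l then rsub l i
      else if i = Suc (nodes l) then nodes r
      else rsub r (i - Suc (nodes l)))"

fun lsub :: "bt \<Rightarrow> nat \<Rightarrow> nat" where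
  "lsub Leaf i = 0"
| "lsub (Node l r) i =
     (if i \<le> nodes l then lsub l i
      else if i = Suc (nodes l) then nodes l
      else lsub r (i - Suc (nodes l)))"

definition TI :: "nat \<Rightarrow> (bt \<times> bt) set" where
  "TI n = {(S, T). nodes S = n \<and> nodes T = n \<and> tamari_le S T}"

definition ti_le :: "bt \<times> bt \<Rightarrow> bt \<times> bt \<Rightarrow> bool" where
  "ti_le I J \<longleftrightarrow> tamari_le (fst I) (fst J) \<and> tamari_le (snd I) (snd J)"

text \<open>Words are represented as functions nat => nat, 1-indexed, relevant on 1..n.\<close>
definition tamari_diagram :: "nat \<Rightarrow> (nat \<Rightarrow> nat) \<Rightarrow> bool" where
  "tamari_diagram n u \<longleftrightarrow>
     (\<forall>i\<in>{1..n}. u i \<le> n - i \<and> (\<forall>j. j \<le> u i \<longrightarrow> u (i + j) \<le> u i - j))"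

definition dual_tamari_diagram :: "nat \<Rightarrow> (nat \<Rightarrow> nat) \<Rightarrow> bool" where
  "dual_tamari_diagram n v \<longleftrightarrow>
     (\<forall>i\<in>{1..n}. v i \<le> i - 1 \<and> (\<forall>j. j \<le> v i \<longrightarrow> v (i - j) \<le> v i - j))"

definition tamari_interval_diagram :: "nat \<Rightarrow> (nat \<Rightarrow> nat) \<Rightarrow> (nat \<Rightarrow> nat) \<Rightarrow> bool" where
  "tamari_interval_diagram n u v \<longleftrightarrow>
     tamari_diagram n u \<and> dual_tamari_diagram n v \<and>
     (\<forall>i j. 1 \<le> i \<and> i < j \<and> j \<le> n \<and> j - i \<le> u i \<longrightarrow> v j < j - i)"

text \<open>Cubic coordinates: c = (c_1,...,c_{n-1}) is the list with c!(i-1) = c_i.\<close>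
definition cc_u :: "nat \<Rightarrow> int list \<Rightarrow> nat \<Rightarrow> nat" where
  "cc_u n c i = (if 1 \<le> i \<and> i \<le> n - 1 then nat (max (c ! (i - 1)) 0) else 0)"

definition cc_v :: "nat \<Rightarrow> int list \<Rightarrow> nat \<Rightarrow> nat" where
  "cc_v n c i = (if 2 \<le> i \<and> i \<le> n then nat \<bar>min (c ! (i - 2)) 0\<bar> else 0)"

definition CC :: "nat \<Rightarrow> int list set" where
  "CC n = {c. length c = n - 1 \<and> tamari_interval_diagram n (cc_u n c) (cc_v n c)}"

definition cc_le :: "int list \<Rightarrow> int list \<Rightarrow> bool" where
  "cc_le c c' \<longleftrightarrow> list_all2 (\<le>) c c'"

definition psi :: "nat \<Rightarrow> bt \<times> bt \<Rightarrow> int list" where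
  "psi n I = map (\<lambda>i. int (rsub (fst I) i) - int (lsub (snd I) (i + 1))) [1..<n]"

end

theory Submission
  imports Defs
begin

text \<open>
  A tree S is determined by the vector r_S of its right subtree sizes, which ranges exactly
  over the Tamari diagrams (split a diagram at its root); by left-right mirroring, T is
  determined by the vector l_T of its left subtree sizes, which ranges over the dual Tamari
  diagrams. A right rotation enlarges r
  at the rotated node only; conversely, if r_S \<le> r_T componentwise, the root of T can be
  rotated to the root of S without changing r_S elsewhere. So the Tamari order is the
  componentwise order on r, and the reverse componentwise order on l, and the compatibility
  condition of the Tamari interval diagram (r_S, l_T) says exactly r_S \<le> r_T, i.e. S \<le> T.
  Finally, for S \<le> T at most one of r_S(i) and l_T(i+1) is nonzero, so they are the positive
  and negative parts of c_i; and integers compare as their positive parts do and opposite to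
  their negative parts.
\<close>

section \<open>Right and left subtree sizes\<close>

lemma rsub_le: "rsub t i \<le> nodes t - i"
proof (induction t arbitrary: i)
  case (Node l r)
  show ?case using Node.IH(1)[of i] Node.IH(2)[of "i - Suc (nodes l)"] by simp linarith
qed simp

lemma rsub_Node_right: "1 \<le> m \<Longrightarrow> rsub (Node l r) (m + Suc (nodes l)) = rsub r m"
  by simp

lemma inorder_cases:
  obtains "i \<le> nodes l" | "i = Suc (nodes l)" | k where "i = k + Suc (nodes l)" "1 \<le> k"
proof (cases "i \<le> Suc (nodes l)")
  case True
  with that(1,2) show ?thesis by linarith
next
  case False
  with that(3)[of "i - Suc (nodes l)"] show ?thesis by simp
qed

lemma rsub_nested:
  "1 \<le> i \<Longrightarrow> i \<le> nodes t \<Longrightarrow> j \<le> rsub t i \<Longrightarrow> rsub t (i + j) \<le> rsub t i - j"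
proof (induction t arbitrary: i)
  case Leaf
  then show ?case by simp
next
  case (Node l r)
  show ?case
  proof (cases i l rule: inorder_cases)
    case 1
    with Node.prems rsub_le[of l i] Node.IH(1)[of i] show ?thesis by auto
  next
    case 2
    with Node.prems rsub_le[of r j] show ?thesis by (cases "j = 0") simp_all
  next
    case (3 k)
    with Node.prems Node.IH(2)[of k] show ?thesis by (simp add: add.commute add.left_commute)
  qed
qed

lemma tamari_diagram_rsub: "tamari_diagram (nodes t) (rsub t)"
  unfolding tamari_diagram_def using rsub_le rsub_nested by auto

lemma lsub_le: "lsub t i \<le> i - 1"
proof (induction t arbitrary: i)
  case (Node l r)
  show ?case using Node.IH(1)[of i] Node.IH(2)[of "i - Suc (nodes l)"] by simp linarith
qed simp

lemma lsub_less_if_in_rsub: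
  "1 \<le> i \<Longrightarrow> i < j \<Longrightarrow> j \<le> nodes t \<Longrightarrow> j - i \<le> rsub t i \<Longrightarrow> lsub t j < j - i"
proof (induction t arbitrary: i j)
  case Leaf
  then show ?case by simp
next
  case (Node l r)
  show ?case
  proof (cases i l rule: inorder_cases)
    case 1
    with Node.prems rsub_le[of l i] Node.IH(1)[of i j] show ?thesis by simp
  next
    case 2
    with Node.prems lsub_le[of r "j - i"] show ?thesis by simp
  next
    case (3 k)
    with Node.prems Node.IH(2)[of k "j - Suc (nodes l)"] show ?thesis by (simp add: add.commute)
  qed
qed

lemma lsub_after_rsub:
  "1 \<le> i \<Longrightarrow> i + rsub t i < nodes t \<Longrightarrow> rsub t i < lsub t (i + rsub t i + 1)"
proof (induction t arbitrary: i)
  case Leaf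
  then show ?case by simp
next
  case (Node l r)
  show ?case
  proof (cases i l rule: inorder_cases)
    case 1
    with Node.prems rsub_le[of l i] Node.IH(1)[of i] show ?thesis
      by (cases "i + rsub l i < nodes l") auto
  next
    case 2
    with Node.prems show ?thesis by simp
  next
    case (3 k)
    with Node.prems Node.IH(2)[of k] show ?thesis by (simp add: add.commute add.left_commute)
  qed
qed

lemma rsub_eq_0: "i = 0 \<or> nodes t \<le> i \<Longrightarrow> rsub t i = 0"
proof -
  have "rsub t 0 = 0"
    by (induction t) simp_all
  then show "i = 0 \<or> nodes t \<le> i \<Longrightarrow> rsub t i = 0"
    using rsub_le[of t i] by auto
qed

section \<open>Mirror symmetry\<close>

fun mirror :: "bt \<Rightarrow> bt" where
  "mirror Leaf = Leaf"
| "mirror (Node l r) = Node (mirror r) (mirror l)"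

lemma nodes_mirror [simp]: "nodes (mirror t) = nodes t"
  by (induction t) auto

lemma mirror_mirror [simp]: "mirror (mirror t) = t"
  by (induction t) auto

lemma lsub_eq_rsub_mirror: "lsub t i = rsub (mirror t) (Suc (nodes t) - i)"
proof (induction t arbitrary: i)
  case Leaf
  then show ?case by simp
next
  case (Node l r)
  show ?case
  proof (cases i l rule: inorder_cases)
    case 1
    then have "lsub (Node l r) i = rsub (mirror l) (Suc (nodes l) - i)"
      using Node.IH(1) by simp
    also have "\<dots> = rsub (mirror (Node l r)) ((Suc (nodes l) - i) + Suc (nodes (mirror r)))"
      using 1 rsub_Node_right[of "Suc (nodes l) - i" "mirror r" "mirror l"] by simp
    also have "(Suc (nodes l) - i) + Suc (nodes (mirror r)) = Suc (nodes (Node l r)) - i"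
      using 1 by simp
    finally show ?thesis .
  next
    case 2
    then show ?thesis by simp
  next
    case (3 k)
    with Node.IH(2)[of k] show ?thesis by (simp add: rsub_eq_0)
  qed
qed

lemma lsub_eq_0: "i \<le> 1 \<or> nodes t < i \<Longrightarrow> lsub t i = 0"
  using lsub_le[of t i] rsub_eq_0[of "Suc (nodes t) - i" "mirror t"] lsub_eq_rsub_mirror[of t i]
  by auto

lemma rsub_mirror: "rsub (mirror t) = (\<lambda>i. lsub t (Suc (nodes t) - i))"
proof
  fix i
  show "rsub (mirror t) i = lsub t (Suc (nodes t) - i)"
  proof (cases "i \<le> Suc (nodes t)")
    case True
    then show ?thesis by (simp add: lsub_eq_rsub_mirror)
  next
    case False
    then show ?thesis by (simp add: rsub_eq_0 lsub_eq_0)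
  qed
qed

lemma dual_tamari_diagram_iff_reversed:
  "dual_tamari_diagram n v \<longleftrightarrow> tamari_diagram n (\<lambda>i. v (Suc n - i))"
proof
  assume "dual_tamari_diagram n v"
  then have bound: "\<And>i. i \<in> {1..n} \<Longrightarrow> v i \<le> i - 1"
    and nested: "\<And>i j. i \<in> {1..n} \<Longrightarrow> j \<le> v i \<Longrightarrow> v (i - j) \<le> v i - j"
    unfolding dual_tamari_diagram_def by auto
  show "tamari_diagram n (\<lambda>i. v (Suc n - i))"
    unfolding tamari_diagram_def
  proof (intro ballI conjI allI impI)
    fix i j
    assume i: "i \<in> {1..n}"
    then have i': "Suc n - i \<in> {1..n}"
      by auto
    with i show "v (Suc n - i) \<le> n - i"
      using bound[OF i'] by simp
    assume "j \<le> v (Suc n - i)"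
    then show "v (Suc n - (i + j)) \<le> v (Suc n - i) - j"
      using nested[OF i'] by (simp add: diff_diff_add)
  qed
next
  assume "tamari_diagram n (\<lambda>i. v (Suc n - i))"
  then have bound: "\<And>i. i \<in> {1..n} \<Longrightarrow> v (Suc n - i) \<le> n - i"
    and nested: "\<And>i j. i \<in> {1..n} \<Longrightarrow> j \<le> v (Suc n - i) \<Longrightarrow>
        v (Suc n - (i + j)) \<le> v (Suc n - i) - j"
    unfolding tamari_diagram_def by auto
  show "dual_tamari_diagram n v"
    unfolding dual_tamari_diagram_def
  proof (intro ballI conjI allI impI)
    fix i j
    assume i: "i \<in> {1..n}"
    then have i': "Suc n - i \<in> {1..n}" and ii: "Suc n - (Suc n - i) = i"
      by auto
    show "v i \<le> i - 1"
      using bound[OF i'] i by (simp add: ii)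
    assume "j \<le> v i"
    moreover have "Suc n - (Suc n - i + j) = i - j"
      using i by simp
    ultimately show "v (i - j) \<le> v i - j"
      using nested[OF i', of j] by (simp add: ii)
  qed
qed

lemma dual_tamari_diagram_lsub: "dual_tamari_diagram (nodes t) (lsub t)"
  using tamari_diagram_rsub[of "mirror t"]
  by (simp add: dual_tamari_diagram_iff_reversed rsub_mirror)

section \<open>The Tamari order through subtree sizes\<close>

lemma rsub_rotate:
  "i \<noteq> Suc (nodes A) \<Longrightarrow> rsub (Node A (Node B C)) i = rsub (Node (Node A B) C) i"
proof (cases i A rule: inorder_cases)
  case (3 k)
  then show ?thesis
    by (cases k B rule: inorder_cases) (simp_all add: add.commute add.left_commute)
qed simp_all

lemma right_rot_nodes: "right_rot s t \<Longrightarrow> nodes s = nodes t"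
  by (induction rule: right_rot.induct) auto

lemma right_rot_rsub: "right_rot s t \<Longrightarrow> rsub s i \<le> rsub t i"
proof (induction arbitrary: i rule: right_rot.induct)
  case (root A B C)
  show ?case
  proof (cases "i = Suc (nodes A)")
    case False
    then show ?thesis
      using rsub_rotate[of i A B C] by (simp del: rsub.simps)
  qed simp
qed (simp_all add: right_rot_nodes)

lemma right_rot_mirror: "right_rot s t \<Longrightarrow> right_rot (mirror t) (mirror s)"
  by (induction rule: right_rot.induct) (auto intro: right_rot.intros)

lemma right_rot_lsub: "right_rot s t \<Longrightarrow> lsub t i \<le> lsub s i"
  using right_rot_rsub[OF right_rot_mirror] right_rot_nodes
  by (metis lsub_eq_rsub_mirror)

lemma rtranclp_map:
  "(\<And>x y. r x y \<Longrightarrow> r (f x) (f y)) \<Longrightarrow> r\<^sup>*\<^sup>* x y \<Longrightarrow> r\<^sup>*\<^sup>* (f x) (f y)"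
  by (erule rtranclp_induct) (auto intro: rtranclp.rtrancl_into_rtrancl)

lemma tamari_le_refl: "tamari_le t t"
  by (simp add: tamari_le_def)

lemma tamari_le_trans: "tamari_le s t \<Longrightarrow> tamari_le t u \<Longrightarrow> tamari_le s u"
  unfolding tamari_le_def by (rule rtranclp_trans)

lemma tamari_le_rotate: "tamari_le (Node (Node A B) C) (Node A (Node B C))"
  unfolding tamari_le_def by (auto intro: right_rot.root)

lemma tamari_le_Node:
  assumes "tamari_le l l'" and "tamari_le r r'"
  shows "tamari_le (Node l r) (Node l' r')"
proof -
  have "tamari_le (Node l r) (Node l' r)"
    using rtranclp_map[of right_rot "\<lambda>x. Node x r"] assms(1)
    unfolding tamari_le_def by (auto intro: right_rot.left)
  moreover have "tamari_le (Node l' r) (Node l' r')"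
    using rtranclp_map[of right_rot "\<lambda>x. Node l' x"] assms(2)
    unfolding tamari_le_def by (auto intro: right_rot.right)
  ultimately show ?thesis
    by (rule tamari_le_trans)
qed

lemma tamari_le_nodes: "tamari_le s t \<Longrightarrow> nodes s = nodes t"
  unfolding tamari_le_def by (induction rule: rtranclp_induct) (auto dest: right_rot_nodes)

lemma tamari_le_rsub: "tamari_le s t \<Longrightarrow> rsub s i \<le> rsub t i"
  unfolding tamari_le_def
  by (induction rule: rtranclp_induct) (auto dest: right_rot_rsub[of _ _ i])

lemma tamari_le_lsub: "tamari_le s t \<Longrightarrow> lsub t i \<le> lsub s i"
  unfolding tamari_le_def
  by (induction rule: rtranclp_induct) (auto dest: right_rot_lsub[of _ _ i])

lemma tamari_le_rotate_to_root:
  assumes "1 \<le> k" and "k \<le> nodes S" and "\<forall>i\<in>{1..<k}. i + rsub S i < k"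
  shows "\<exists>S1 S2. nodes S1 = k - 1 \<and> tamari_le S (Node S1 S2)
    \<and> (\<forall>i. i \<noteq> k \<longrightarrow> rsub (Node S1 S2) i = rsub S i)"
  using assms
proof (induction S arbitrary: k)
  case Leaf
  then show ?case by simp
next
  case (Node L R)
  consider "k = Suc (nodes L)" | "Suc (nodes L) < k" | "k \<le> nodes L"
    by linarith
  then show ?case
  proof cases
    case 1
    then show ?thesis
      using tamari_le_refl[of "Node L R"] by (intro exI[of _ L] exI[of _ R]) (simp del: rsub.simps)
  next
    case 2
    then have "Suc (nodes L) + nodes R < k"
      using bspec[OF Node.prems(3), of "Suc (nodes L)"] by simp
    with Node.prems(2) show ?thesis
      by simp
  next
    case 3
    with Node.prems have "\<forall>i\<in>{1..<k}. i + rsub L i < k"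
      by auto
    with 3 Node.prems(1) obtain L1 L2 where
      L1: "nodes L1 = k - 1" and L: "tamari_le L (Node L1 L2)"
      and rsub_L: "\<forall>i. i \<noteq> k \<longrightarrow> rsub (Node L1 L2) i = rsub L i"
      using Node.IH(1) by blast
    have "tamari_le (Node L R) (Node L1 (Node L2 R))"
      using tamari_le_Node[OF L tamari_le_refl] tamari_le_rotate by (rule tamari_le_trans)
    moreover have "rsub (Node L1 (Node L2 R)) i = rsub (Node L R) i" if "i \<noteq> k" for i
    proof -
      have "rsub (Node L1 (Node L2 R)) i = rsub (Node (Node L1 L2) R) i"
        using that L1 Node.prems(1) by (simp only: rsub_rotate)
      also have "\<dots> = rsub (Node L R) i"
        using that rsub_L tamari_le_nodes[OF L] by simp
      finally show ?thesis .
    qed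
    ultimately show ?thesis
      using L1 by blast
  qed
qed

lemma tamari_le_if_rsub_le:
  "nodes S = nodes T \<Longrightarrow> \<forall>i\<in>{1..nodes T}. rsub S i \<le> rsub T i \<Longrightarrow> tamari_le S T"
proof (induction T arbitrary: S)
  case Leaf
  then show ?case
    using tamari_le_refl by (cases S) auto
next
  case (Node T1 T2)
  define k where "k = Suc (nodes T1)"
  have "i + rsub S i < k" if i: "i \<in> {1..<k}" for i
  proof -
    have "rsub S i \<le> rsub (Node T1 T2) i"
      using i bspec[OF Node.prems(2), of i] unfolding k_def by simp
    also have "\<dots> \<le> nodes T1 - i"
      using i rsub_le[of T1 i] unfolding k_def by simp
    finally show ?thesis
      using i unfolding k_def by auto
  qed
  with Node.prems(1) obtain S1 S2 where
    S1: "nodes S1 = nodes T1" and S: "tamari_le S (Node S1 S2)"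
    and rsub_S: "\<forall>i. i \<noteq> k \<longrightarrow> rsub (Node S1 S2) i = rsub S i"
    using tamari_le_rotate_to_root[of k S] unfolding k_def by auto
  have S2: "nodes S2 = nodes T2"
    using tamari_le_nodes[OF S] Node.prems(1) S1 by simp
  have "tamari_le S1 T1"
  proof (rule Node.IH(1)[OF S1], rule ballI)
    fix i
    assume i: "i \<in> {1..nodes T1}"
    then have "rsub S1 i = rsub S i"
      using rsub_S[rule_format, of i] S1 unfolding k_def by simp
    also have "\<dots> \<le> rsub T1 i"
      using Node.prems(2) i by force
    finally show "rsub S1 i \<le> rsub T1 i" .
  qed
  moreover have "tamari_le S2 T2"
  proof (rule Node.IH(2)[OF S2], rule ballI)
    fix i
    assume i: "i \<in> {1..nodes T2}"
    then have "rsub S2 i = rsub S (i + k)"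
      using rsub_S[rule_format, of "i + k"] S1 unfolding k_def by simp
    also have "\<dots> \<le> rsub T2 i"
      using bspec[OF Node.prems(2), of "i + k"] i unfolding k_def by simp
    finally show "rsub S2 i \<le> rsub T2 i" .
  qed
  ultimately show ?case
    using tamari_le_trans[OF S tamari_le_Node] by blast
qed

lemma rsub_Node_eq_nodes_minus:
  "1 \<le> i \<Longrightarrow> rsub (Node l r) i = nodes (Node l r) - i \<Longrightarrow> Suc (nodes l) \<le> i"
  using rsub_le[of l i] by (cases "i \<le> nodes l") auto

lemma rsub_inject:
  "nodes S = nodes T \<Longrightarrow> \<forall>i\<in>{1..nodes T}. rsub S i = rsub T i \<Longrightarrow> S = T"
proof (induction T arbitrary: S)
  case Leaf
  then show ?case by (cases S) auto
next
  case (Node L R)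
  then obtain L' R' where S: "S = Node L' R'"
    by (cases S) auto
  have "Suc (nodes L) \<le> Suc (nodes L')"
  proof (rule rsub_Node_eq_nodes_minus)
    show "rsub (Node L R) (Suc (nodes L')) = nodes (Node L R) - Suc (nodes L')"
      using bspec[OF Node.prems(2), of "Suc (nodes L')"] Node.prems(1) S by simp
  qed simp
  moreover have "Suc (nodes L') \<le> Suc (nodes L)"
  proof (rule rsub_Node_eq_nodes_minus)
    show "rsub (Node L' R') (Suc (nodes L)) = nodes (Node L' R') - Suc (nodes L)"
      using bspec[OF Node.prems(2), of "Suc (nodes L)"] Node.prems(1) S by simp
  qed simp
  ultimately have L': "nodes L' = nodes L"
    by simp
  have "L' = L"
  proof (rule Node.IH(1)[OF L'], rule ballI)
    fix i
    assume "i \<in> {1..nodes L}"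
    then show "rsub L' i = rsub L i"
      using bspec[OF Node.prems(2), of i] L' S by simp
  qed
  moreover have "R' = R"
  proof (rule Node.IH(2))
    show "nodes R' = nodes R"
      using Node.prems(1) L' S by simp
    show "\<forall>i\<in>{1..nodes R}. rsub R' i = rsub R i"
    proof
      fix i
      assume "i \<in> {1..nodes R}"
      then show "rsub R' i = rsub R i"
        using bspec[OF Node.prems(2), of "i + Suc (nodes L)"] L' S by simp
    qed
  qed
  ultimately show ?case
    using S by simp
qed

definition interval_compatible :: "nat \<Rightarrow> (nat \<Rightarrow> nat) \<Rightarrow> (nat \<Rightarrow> nat) \<Rightarrow> bool" where
  "interval_compatible n u v \<longleftrightarrow> (\<forall>i j. 1 \<le> i \<and> i < j \<and> j \<le> n \<and> j - i \<le> u i \<longrightarrow> v j < j - i)"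

lemma interval_compatible_iff_rsub_le:
  assumes "nodes S = n" and "nodes T = n"
  shows "interval_compatible n (rsub S) (lsub T) \<longleftrightarrow> (\<forall>i\<in>{1..n}. rsub S i \<le> rsub T i)"
proof
  assume compatible: "interval_compatible n (rsub S) (lsub T)"
  show "\<forall>i\<in>{1..n}. rsub S i \<le> rsub T i"
  proof (rule ballI, rule ccontr)
    fix i
    assume i: "i \<in> {1..n}" and not_le: "\<not> rsub S i \<le> rsub T i"
    \<comment> \<open>the node just after the right subtree of i in T lies in the right subtree of i in S\<close>
    define j where "j = i + rsub T i + 1"
    have "rsub S i \<le> n - i"
      using rsub_le[of S i] assms(1) by simp
    with i not_le have j: "i < j" "j \<le> n" "j - i \<le> rsub S i"
      unfolding j_def by auto
    then have "lsub T j < j - i"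
      using compatible[unfolded interval_compatible_def, rule_format, of i j] i by simp
    moreover have "rsub T i < lsub T j"
      using lsub_after_rsub[of i T] i j assms(2) unfolding j_def by simp
    ultimately show False
      unfolding j_def by simp
  qed
next
  assume "\<forall>i\<in>{1..n}. rsub S i \<le> rsub T i"
  then have "j - i \<le> rsub T i" if "1 \<le> i" "i < j" "j \<le> n" "j - i \<le> rsub S i" for i j
    using that by force
  then show "interval_compatible n (rsub S) (lsub T)"
    unfolding interval_compatible_def using lsub_less_if_in_rsub[of _ _ T] assms(2) by blast
qed

lemma interval_compatible_if_lsub_ge:
  "nodes T = n \<Longrightarrow> \<forall>j\<in>{1..n}. lsub T' j \<le> lsub T j \<Longrightarrow> interval_compatible n (rsub T) (lsub T')"
  unfolding interval_compatible_def
proof (intro allI impI)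
  fix i j
  assume "nodes T = n" "\<forall>j\<in>{1..n}. lsub T' j \<le> lsub T j"
    and ij: "1 \<le> i \<and> i < j \<and> j \<le> n \<and> j - i \<le> rsub T i"
  then have "lsub T' j \<le> lsub T j"
    by simp
  also have "\<dots> < j - i"
    using lsub_less_if_in_rsub[of i j T] ij \<open>nodes T = n\<close> by simp
  finally show "lsub T' j < j - i" .
qed

lemma tamari_le_iff_rsub_le:
  "nodes S = n \<Longrightarrow> nodes T = n \<Longrightarrow> tamari_le S T \<longleftrightarrow> (\<forall>i\<in>{1..n}. rsub S i \<le> rsub T i)"
  using tamari_le_rsub tamari_le_if_rsub_le by metis

lemma tamari_le_iff_lsub_ge:
  "nodes S = n \<Longrightarrow> nodes T = n \<Longrightarrow> tamari_le S T \<longleftrightarrow> (\<forall>i\<in>{1..n}. lsub T i \<le> lsub S i)"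
proof
  show "tamari_le S T \<Longrightarrow> \<forall>i\<in>{1..n}. lsub T i \<le> lsub S i"
    using tamari_le_lsub by blast
next
  assume S: "nodes S = n" and T: "nodes T = n" and ge: "\<forall>i\<in>{1..n}. lsub T i \<le> lsub S i"
  have "interval_compatible n (rsub S) (lsub T)"
    using S ge by (rule interval_compatible_if_lsub_ge)
  then show "tamari_le S T"
    using interval_compatible_iff_rsub_le[OF S T] tamari_le_if_rsub_le S T by simp
qed

lemma tamari_interval_diagram_iff_tamari_le:
  "nodes S = n \<Longrightarrow> nodes T = n \<Longrightarrow> tamari_interval_diagram n (rsub S) (lsub T) \<longleftrightarrow> tamari_le S T"
  using tamari_diagram_rsub[of S] dual_tamari_diagram_lsub[of T]
    interval_compatible_iff_rsub_le[of S n T] tamari_le_iff_rsub_le[of S n T]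
  unfolding tamari_interval_diagram_def interval_compatible_def by simp

lemma tamari_le_antisym:
  assumes "tamari_le S T" and "tamari_le T S"
  shows "S = T"
proof (rule rsub_inject)
  show "nodes S = nodes T"
    using assms(1) by (rule tamari_le_nodes)
  show "\<forall>i\<in>{1..nodes T}. rsub S i = rsub T i"
    using tamari_le_rsub[OF assms(1)] tamari_le_rsub[OF assms(2)] by (simp add: le_antisym)
qed

section \<open>Trees from Tamari diagrams\<close>

lemma tamari_diagramD:
  assumes "tamari_diagram n u" and "i \<in> {1..n}"
  shows "u i \<le> n - i" and "j \<le> u i \<Longrightarrow> u (i + j) \<le> u i - j"
  using assms unfolding tamari_diagram_def by auto

lemma tamari_diagram_shift:
  assumes "tamari_diagram n u" and "m \<le> n"
  shows "tamari_diagram (n - m) (\<lambda>i. u (i + m))"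
  unfolding tamari_diagram_def
proof (intro ballI conjI allI impI)
  fix i j
  assume "i \<in> {1..n - m}"
  then have i: "i + m \<in> {1..n}"
    by auto
  show "u (i + m) \<le> n - m - i"
    using tamari_diagramD(1)[OF assms(1) i] by simp
  assume "j \<le> u (i + m)"
  then show "u (i + j + m) \<le> u (i + m) - j"
    using tamari_diagramD(2)[OF assms(1) i, of j] by (simp add: ac_simps)
qed

lemma tamari_diagram_prefix:
  assumes u: "tamari_diagram n u" and m: "m \<in> {1..n}" "u m = n - m"
    and before_m: "\<forall>i\<in>{1..<m}. u i < n - i"
  shows "tamari_diagram (m - 1) u"
  unfolding tamari_diagram_def
proof (intro ballI conjI allI impI)
  fix i j
  assume i: "i \<in> {1..m - 1}"
  with m have i': "i \<in> {1..n}"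
    by auto
  show "u i \<le> m - 1 - i"
  proof (rule ccontr)
    assume "\<not> u i \<le> m - 1 - i"
    then have "m - i \<le> u i"
      by linarith
    \<comment> \<open>then m lies in the right subtree of i, which is therefore too large\<close>
    moreover have "i + (m - i) = m"
      using i by auto
    ultimately have "u m \<le> u i - (m - i)"
      using tamari_diagramD(2)[OF u i', of "m - i"] by simp
    moreover have "u i < n - i"
      using before_m i by auto
    ultimately show False
      using m i \<open>m - i \<le> u i\<close> by simp
  qed
  assume "j \<le> u i"
  then show "u (i + j) \<le> u i - j"
    by (rule tamari_diagramD(2)[OF u i'])
qed

lemma rsub_surj: "tamari_diagram n u \<Longrightarrow> \<exists>t. nodes t = n \<and> (\<forall>i\<in>{1..n}. rsub t i = u i)"
proof (induction n arbitrary: u rule: less_induct)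
  case (less n)
  show ?case
  proof (cases "n = 0")
    case True
    then show ?thesis
      by (intro exI[of _ Leaf]) simp
  next
    case False
    \<comment> \<open>the root is the first node whose right subtree reaches the last node\<close>
    define P where "P i \<longleftrightarrow> i \<in> {1..n} \<and> u i = n - i" for i
    define m where "m = (LEAST i. P i)"
    have "P n"
      using tamari_diagramD(1)[OF less.prems, of n] False unfolding P_def by auto
    then have m: "m \<in> {1..n}" "u m = n - m"
      using LeastI[of P n] unfolding m_def P_def by auto
    have before_m: "\<forall>i\<in>{1..<m}. u i < n - i"
      using not_less_Least[of _ P] tamari_diagramD(1)[OF less.prems] m
      unfolding m_def P_def by fastforce
    have "m - 1 < n"
      using m by auto
    then obtain L where L: "nodes L = m - 1" "\<forall>i\<in>{1..m - 1}. rsub L i = u i"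
      using less.IH tamari_diagram_prefix[OF less.prems m before_m] by blast
    obtain R where R: "nodes R = n - m" "\<forall>i\<in>{1..n - m}. rsub R i = u (i + m)"
      using less.IH[of "n - m"] tamari_diagram_shift[OF less.prems] m by fastforce
    have "rsub (Node L R) i = u i" if i: "i \<in> {1..n}" for i
    proof (cases i L rule: inorder_cases)
      case 1
      then show ?thesis
        using L i by simp
    next
      case 2
      then show ?thesis
        using L R m by auto
    next
      case (3 k)
      then show ?thesis
        using L R m i by (simp add: add.commute)
    qed
    then show ?thesis
      using L R m by (intro exI[of _ "Node L R"]) auto
  qed
qed

lemma lsub_surj:
  assumes "dual_tamari_diagram n v"
  shows "\<exists>t. nodes t = n \<and> (\<forall>i\<in>{1..n}. lsub t i = v i)"
proof -
  obtain t where t: "nodes t = n" "\<forall>i\<in>{1..n}. rsub t i = v (Suc n - i)"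
    using rsub_surj assms unfolding dual_tamari_diagram_iff_reversed by blast
  have "lsub (mirror t) i = v i" if "i \<in> {1..n}" for i
  proof -
    have "Suc n - i \<in> {1..n}" and "Suc n - (Suc n - i) = i"
      using that by auto
    then show ?thesis
      using t bspec[OF t(2), of "Suc n - i"] by (simp add: lsub_eq_rsub_mirror)
  qed
  with t(1) show ?thesis
    by (intro exI[of _ "mirror t"]) simp
qed

section \<open>Cubic coordinates\<close>

lemma int_le_iff_parts_le:
  "(x::int) \<le> y \<longleftrightarrow> nat (max x 0) \<le> nat (max y 0) \<and> nat \<bar>min y 0\<bar> \<le> nat \<bar>min x 0\<bar>"
  by linarith

lemma cc_le_iff_cc_u_cc_v:
  assumes "length c = n - 1" and "length c' = n - 1"
  shows "cc_le c c' \<longleftrightarrow> (\<forall>i\<in>{1..n}. cc_u n c i \<le> cc_u n c' i \<and> cc_v n c' i \<le> cc_v n c i)"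
proof -
  have "cc_le c c' \<longleftrightarrow> (\<forall>k<n - 1. c ! k \<le> c' ! k)"
    using assms by (simp add: cc_le_def list_all2_conv_all_nth)
  also have "\<dots> \<longleftrightarrow> (\<forall>i\<in>{1..n}. cc_u n c i \<le> cc_u n c' i \<and> cc_v n c' i \<le> cc_v n c i)"
  proof
    assume "\<forall>k<n - 1. c ! k \<le> c' ! k"
    then show "\<forall>i\<in>{1..n}. cc_u n c i \<le> cc_u n c' i \<and> cc_v n c' i \<le> cc_v n c i"
      unfolding cc_u_def cc_v_def int_le_iff_parts_le by force
  next
    assume parts: "\<forall>i\<in>{1..n}. cc_u n c i \<le> cc_u n c' i \<and> cc_v n c' i \<le> cc_v n c i"
    show "\<forall>k<n - 1. c ! k \<le> c' ! k"
    proof (intro allI impI)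
      fix k
      assume "k < n - 1"
      then show "c ! k \<le> c' ! k"
        using bspec[OF parts, of "Suc k"] bspec[OF parts, of "Suc (Suc k)"]
        unfolding cc_u_def cc_v_def int_le_iff_parts_le by simp
    qed
  qed
  finally show ?thesis .
qed

lemma cc_le_antisym: "cc_le c c' \<Longrightarrow> cc_le c' c \<Longrightarrow> c = c'"
  unfolding cc_le_def using list_all2_antisym[of "(\<le>)" "(\<le>)" c c'] by auto

lemma rsub_zero_or_lsub_Suc_zero:
  assumes "tamari_le S T" and "1 \<le> i" and "i < nodes S"
  shows "rsub S i = 0 \<or> lsub T (Suc i) = 0"
proof (cases "rsub S i = 0")
  case False
  then have "lsub S (Suc i) = 0"
    using lsub_less_if_in_rsub[of i "Suc i" S] assms(2,3) by simp
  then show ?thesis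
    using tamari_le_lsub[OF assms(1), of "Suc i"] by simp
qed simp

lemma length_psi: "length (psi n I) = n - 1"
  by (simp add: psi_def)

lemma psi_nth:
  "k < n - 1 \<Longrightarrow> psi n (S, T) ! k = int (rsub S (Suc k)) - int (lsub T (Suc (Suc k)))"
  by (simp add: psi_def)

lemma cc_u_psi:
  assumes "(S, T) \<in> TI n"
  shows "cc_u n (psi n (S, T)) = rsub S"
proof
  fix i
  have S: "nodes S = n" and ST: "tamari_le S T"
    using assms by (auto simp: TI_def)
  show "cc_u n (psi n (S, T)) i = rsub S i"
  proof (cases "1 \<le> i \<and> i \<le> n - 1")
    case True
    then have "i - 1 < n - 1" and "Suc (i - 1) = i"
      by auto
    then have "psi n (S, T) ! (i - 1) = int (rsub S i) - int (lsub T (Suc i))"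
      using psi_nth[of "i - 1" n S T] by simp
    moreover have "rsub S i = 0 \<or> lsub T (Suc i) = 0"
      using rsub_zero_or_lsub_Suc_zero[OF ST, of i] True S by linarith
    ultimately show ?thesis
      using True by (auto simp: cc_u_def)
  next
    case False
    then show ?thesis
      using rsub_eq_0[of i S] S by (auto simp: cc_u_def)
  qed
qed

lemma cc_v_psi:
  assumes "(S, T) \<in> TI n"
  shows "cc_v n (psi n (S, T)) = lsub T"
proof
  fix i
  have S: "nodes S = n" and T: "nodes T = n" and ST: "tamari_le S T"
    using assms by (auto simp: TI_def)
  show "cc_v n (psi n (S, T)) i = lsub T i"
  proof (cases "2 \<le> i \<and> i \<le> n")
    case True
    then have "Suc (i - 2) = i - 1" and "Suc (Suc (i - 2)) = i"
      by auto
    with True have "psi n (S, T) ! (i - 2) = int (rsub S (i - 1)) - int (lsub T i)"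
      using psi_nth[of "i - 2" n S T] by simp
    moreover have "rsub S (i - 1) = 0 \<or> lsub T i = 0"
      using rsub_zero_or_lsub_Suc_zero[OF ST, of "i - 1"] True S by auto
    ultimately show ?thesis
      using True by (auto simp: cc_v_def)
  next
    case False
    then show ?thesis
      using lsub_eq_0[of i T] T by (auto simp: cc_v_def)
  qed
qed

lemma psi_in_CC:
  assumes "I \<in> TI n"
  shows "psi n I \<in> CC n"
proof -
  obtain S T where I: "I = (S, T)" and "nodes S = n" "nodes T = n" "tamari_le S T"
    using assms by (auto simp: TI_def)
  then have "tamari_interval_diagram n (rsub S) (lsub T)"
    by (simp add: tamari_interval_diagram_iff_tamari_le)
  then show ?thesis
    using assms cc_u_psi cc_v_psi unfolding I CC_def by (simp add: length_psi)
qed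

lemma ti_le_iff_cc_le_psi:
  assumes "I \<in> TI n" and "J \<in> TI n"
  shows "ti_le I J \<longleftrightarrow> cc_le (psi n I) (psi n J)"
proof -
  obtain S T S' T' where I: "I = (S, T)" and J: "J = (S', T')"
    and n: "nodes S = n" "nodes T = n" "nodes S' = n" "nodes T' = n"
    using assms by (auto simp: TI_def)
  have "cc_le (psi n I) (psi n J) \<longleftrightarrow>
      (\<forall>i\<in>{1..n}. rsub S i \<le> rsub S' i \<and> lsub T' i \<le> lsub T i)"
    using cc_le_iff_cc_u_cc_v[of "psi n I" n "psi n J"] assms
    unfolding I J by (simp add: cc_u_psi cc_v_psi length_psi)
  also have "\<dots> \<longleftrightarrow> ti_le I J"
    using tamari_le_iff_rsub_le[of S n S'] tamari_le_iff_lsub_ge[of T n T'] n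
    unfolding I J ti_le_def by auto
  finally show ?thesis ..
qed

lemma psi_surj:
  assumes "c \<in> CC n"
  shows "c \<in> psi n ` TI n"
proof -
  have c: "length c = n - 1" and diagram: "tamari_interval_diagram n (cc_u n c) (cc_v n c)"
    using assms by (auto simp: CC_def)
  obtain S where S: "nodes S = n" "\<forall>i\<in>{1..n}. rsub S i = cc_u n c i"
    using rsub_surj diagram unfolding tamari_interval_diagram_def by blast
  obtain T where T: "nodes T = n" "\<forall>i\<in>{1..n}. lsub T i = cc_v n c i"
    using lsub_surj diagram unfolding tamari_interval_diagram_def by blast
  have rsub_S: "rsub S = cc_u n c"
  proof
    fix i
    show "rsub S i = cc_u n c i"
      using S rsub_eq_0[of i S] by (cases "i \<in> {1..n}") (auto simp: cc_u_def)
  qed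
  have lsub_T: "lsub T = cc_v n c"
  proof
    fix i
    show "lsub T i = cc_v n c i"
      using T lsub_eq_0[of i T] by (cases "i \<in> {1..n}") (auto simp: cc_v_def)
  qed
  have ST: "(S, T) \<in> TI n"
    using diagram tamari_interval_diagram_iff_tamari_le[OF S(1) T(1)] S(1) T(1)
    unfolding TI_def rsub_S lsub_T by simp
  moreover have "psi n (S, T) = c"
    using cc_le_iff_cc_u_cc_v[of "psi n (S, T)" n c] cc_le_iff_cc_u_cc_v[of c n "psi n (S, T)"] c
    by (intro cc_le_antisym) (simp_all add: cc_u_psi[OF ST] cc_v_psi[OF ST] rsub_S lsub_T length_psi)
  ultimately show ?thesis
    by blast
qed

theorem theorem3p2:
  fixes n :: nat
  assumes "n \<ge> 1"
  shows "psi n ` TI n \<subseteq> CC n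
    \<and> bij_betw (psi n) (TI n) (CC n)
    \<and> (\<forall>I\<in>TI n. \<forall>J\<in>TI n. ti_le I J \<longleftrightarrow> cc_le (psi n I) (psi n J))"
proof (intro conjI)
  show into: "psi n ` TI n \<subseteq> CC n"
    using psi_in_CC by blast
  show order: "\<forall>I\<in>TI n. \<forall>J\<in>TI n. ti_le I J \<longleftrightarrow> cc_le (psi n I) (psi n J)"
    using ti_le_iff_cc_le_psi by blast
  have "inj_on (psi n) (TI n)"
  proof (rule inj_onI)
    fix I J
    assume "I \<in> TI n" "J \<in> TI n" "psi n I = psi n J"
    with order have "ti_le I J" and "ti_le J I"
      by (simp_all add: cc_le_def list.rel_refl)
    then show "I = J"
      unfolding ti_le_def by (simp add: tamari_le_antisym prod_eq_iff)
  qed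
  with into psi_surj show "bij_betw (psi n) (TI n) (CC n)"
    unfolding bij_betw_def by blast
qed

end
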